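(* Let $p$ be an odd prime and let $\alpha$ be an indeterminate over $\mathbb F_p$. There is a unique polynomial $G^{(\alpha)}(X)\in\mathbb F_p(\alpha)[X]$ of degree less than $p$ such that \[ G^{(\alpha)}\bigl(L_{p-1}^{(\alpha)}(X)\bigr)\equiv X \pmod{X^p-(\alpha^p-\alpha)} \] in $\mathbb F_p(\alpha)[X]$, and it is given by \[ G^{(\alpha)}(X)=-\sum_{k=1}^{p-1}\frac{1}{k}\,\frac{X^{k}}{\prod_{s=1}^{k-1}b_{1,s}(\alpha)}, \] where the empty product (for $k=1$) equals $1$.
   Context: $p$ is an odd prime and $\mathbb F_p$ the field of $p$ elements. The (generalized Laguerre) polynomial $L_{p-1}^{(\alpha)}(X)\in\mathbb F_p[\alpha,X]$ is defined by $L_{p-1}^{(\alpha)}(X)=\sum_{k=0}^{p-1}\binom{\alpha-1}{p-1-k}\frac{(-X)^k}{k!}$, where $\binom{x}{m}=x(x-1)\cdots(x-m+1)/m!$. For integers $0<r,s<p$ (integers are freely interpreted as elements of $\mathbb F_p$), the polynomial $b_{r,s}(\alpha)\in\mathbb F_p[\alpha]$ is defined by $b_{r,s}(\alpha)=\sum_{k=0}^{p-1}(-r/s)^k\binom{r\alpha-1}{p-1-k}\binom{s\alpha-1}{k}$. *)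

theory Defs
  imports "Berlekamp_Zassenhaus.Finite_Field"
    "HOL-Computational_Algebra.Polynomial"
    "HOL-Computational_Algebra.Fraction_Field"
begin

text \<open>F_p is the type 'p mod_ring with CARD('p) = p prime; F_p[alpha] is 'p mod_ring poly,
  F_p(alpha) is ('p mod_ring poly) fract.\<close>

definition pbinom :: "'a::field poly \<Rightarrow> nat \<Rightarrow> 'a poly" where
  "pbinom x m = smult (inverse (of_nat (fact m))) (\<Prod>i<m. x - of_nat i)"

definition alpha :: "'a::field poly" where
  "alpha = [:0, 1:]"

text \<open>Coefficient of X^k in L_{p-1}^{(alpha)}(X): binom(alpha-1, p-1-k) (-1)^k / k!.\<close>
definition laguerre_coeff :: "nat \<Rightarrow> nat \<Rightarrow> 'a::field poly" where
  "laguerre_coeff p k = smult ((-1) ^ k * inverse (of_nat (fact k))) (pbinom (alpha - 1) (p - 1 - k))"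

definition laguerre :: "nat \<Rightarrow> ('a::field poly) fract poly" where
  "laguerre p = (\<Sum>k<p. monom (to_fract (laguerre_coeff p k)) k)"

definition bpoly :: "nat \<Rightarrow> nat \<Rightarrow> nat \<Rightarrow> 'a::field poly" where
  "bpoly p r s = (\<Sum>k<p. smult ((- (of_nat r / of_nat s)) ^ k)
      (pbinom (smult (of_nat r) alpha - 1) (p - 1 - k) * pbinom (smult (of_nat s) alpha - 1) k))"

definition Gpoly :: "nat \<Rightarrow> ('a::field poly) fract poly" where
  "Gpoly p = - (\<Sum>k=1..p-1. monom (inverse (of_nat k) *
       inverse (\<Prod>s=1..k-1. to_fract (bpoly p 1 s))) k)"

end

(*
  Write p for the characteristic, a for alpha, N = X^p - (a^p - a) and
  M_s = L_{p-1}^{(s a)}(s X).  Each M_s is annihilated modulo N by the first-order operator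
  X d/dX - s (X - a).  Among polynomials of degree < p, the solutions of such a congruence form
  a line (the coefficients obey a two-term recurrence), and the operators are additive in s on
  products.  Hence M_1 M_s = b_{1,s} M_{s+1} mod N, the constant being read off from the
  coefficient of X^{p-1}, and by induction M_1^k = (b_{1,1} ... b_{1,k-1}) M_k mod N.  Power
  sums over F_p give sum_{k=1}^{p-1} M_k / k = -X, and substituting the previous congruence
  yields G(M_1) = X mod N; the b_{1,s} are nonzero since b_{1,s}(0) = 1.  For uniqueness,
  differentiating gives G'(M_1) M_1' = 1 mod N, so D(M_1) = 0 mod N implies D'(M_1) = 0 mod N;
  as deg D < p forces D' to be nonzero for nonconstant D, induction on the degree gives D = 0.
*)
theory Submission
  imports Defs "Subresultants.More_Homomorphisms"
begin

section \<open>Arithmetic in characteristic p\<close>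

lemma of_nat_neq_0_below_CHAR:
  "0 < k \<Longrightarrow> k < CHAR('a) \<Longrightarrow> of_nat k \<noteq> (0 :: 'a::semiring_1)"
  by (auto simp: of_nat_eq_0_iff_char_dvd dest: dvd_imp_le)

lemma of_nat_fact_neq_0_CHAR:
  "n < CHAR('a) \<Longrightarrow> of_nat (fact n) \<noteq> (0 :: 'a::semiring_prime_char)"
  by (simp add: of_nat_eq_0_iff_char_dvd prime_dvd_fact_iff)


lemma of_nat_power_CHAR: "(of_nat n :: 'a::comm_semiring_prime_char) ^ CHAR('a) = of_nat n"
  by (induction n) (simp_all add: freshmans_dream power_0_left)

lemma fact_CHAR_minus_1: "of_nat (fact (CHAR('a) - 1)) = (-1 :: 'a::comm_ring_prime_char)"
proof -
  have "[int (fact (CHAR('a) - 1)) = - 1] (mod int CHAR('a))"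
    using wilson_theorem[of "CHAR('a)"] by simp
  then have "of_int (int (fact (CHAR('a) - 1))) = (of_int (-1) :: 'a)"
    by (simp only: of_int_eq_iff_cong_CHAR)
  then show ?thesis by (simp only: of_int_of_nat_eq of_int_minus of_int_1)
qed

lemma fact_mult_fact_CHAR:
  "i < CHAR('a) \<Longrightarrow>
    of_nat (fact i) * of_nat (fact (CHAR('a) - 1 - i)) = (-1 :: 'a::comm_ring_prime_char) ^ Suc i"
proof (induction i)
  case 0
  then show ?case using fact_CHAR_minus_1[where 'a='a] by simp
next
  case (Suc i)
  have "CHAR('a) - 1 - i = Suc (CHAR('a) - 1 - Suc i)"
    using Suc.prems by simp
  then have "(of_nat (fact (CHAR('a) - 1 - i)) :: 'a)
      = of_nat (CHAR('a) - Suc i) * of_nat (fact (CHAR('a) - 1 - Suc i))"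
    using Suc.prems by (simp only: fact_Suc of_nat_mult) simp
  also have "(of_nat (CHAR('a) - Suc i) :: 'a) = - of_nat (Suc i)"
    using Suc.prems by (simp add: of_nat_diff)
  finally have "(of_nat (fact (Suc i)) * of_nat (fact (CHAR('a) - 1 - Suc i)) :: 'a)
      = - (of_nat (fact i) * of_nat (fact (CHAR('a) - 1 - i)))"
    by (simp only: fact_Suc of_nat_mult of_nat_id) (simp add: algebra_simps)
  with Suc show ?case by simp
qed

lemma sum_of_nat_power_CHAR:
  assumes "m < CHAR('a) - 1"
  shows "(\<Sum>k<CHAR('a). of_nat k ^ m :: 'a::idom_prime_char) = 0"
  using assms
proof (induction m rule: less_induct)
  case (less m)
  define S where "S j = (\<Sum>k<CHAR('a). of_nat k ^ j :: 'a)" for j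
  have "(\<Sum>k<CHAR('a). of_nat (Suc k) ^ Suc m - of_nat k ^ Suc m :: 'a) = 0"
    by (simp only: sum_lessThan_telescope[where f = "\<lambda>k. of_nat k ^ Suc m"]) simp
  moreover have "of_nat (Suc k) ^ Suc m - of_nat k ^ Suc m
      = (\<Sum>j\<le>m. of_nat (Suc m choose j) * of_nat k ^ j :: 'a)" for k
  proof -
    have "(of_nat k + 1 :: 'a) ^ Suc m
        = (\<Sum>j\<le>m. of_nat (Suc m choose j) * of_nat k ^ j) + of_nat k ^ Suc m"
      by (simp only: binomial_ring sum.atMost_Suc power_one mult_1_right binomial_n_n) simp
    then show ?thesis
      by (simp only: of_nat_Suc add.commute[of 1]) simp
  qed
  ultimately have "(\<Sum>j\<le>m. of_nat (Suc m choose j) * S j) = 0"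
    by (simp add: S_def sum_distrib_left sum.swap[of _ "{..<CHAR('a)}"])
  moreover have "S j = 0" if "j < m" for j
    using less that unfolding S_def by simp
  ultimately have "of_nat (Suc m) * S m = 0"
    by (simp add: lessThan_Suc_atMost[symmetric])
  moreover have "(of_nat (Suc m) :: 'a) \<noteq> 0"
    using less.prems by (intro of_nat_neq_0_below_CHAR) simp_all
  ultimately show ?case
    by (simp add: S_def)
qed

lemma of_nat_inj_on_CHAR: "inj_on (of_nat :: nat \<Rightarrow> 'a::semiring_1_cancel) {..<CHAR('a)}"
  by (rule inj_onI) (simp add: of_nat_eq_iff_cong_CHAR cong_def)

lemma prod_linear_of_nat_CHAR:
  "(\<Prod>i<CHAR('a). [:- of_nat i, 1:]) = (monom 1 CHAR('a) - [:0, 1:] :: 'a::field_prime_char poly)"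
proof (rule poly_eqI_degree_lead_coeff[where n = "CHAR('a)" and A = "of_nat ` {..<CHAR('a)}"])
  have p2: "CHAR('a) \<ge> 2"
    using prime_ge_2_nat by simp
  have deg: "degree (\<Prod>i<CHAR('a). [:- of_nat i, 1:] :: 'a poly) = CHAR('a)"
    by (subst degree_prod_eq_sum_degree) auto
  have lead: "lead_coeff (\<Prod>i<CHAR('a). [:- of_nat i, 1:] :: 'a poly) = 1"
    by (simp add: lead_coeff_prod)
  show "coeff (\<Prod>i<CHAR('a). [:- of_nat i, 1:] :: 'a poly) CHAR('a)
      = coeff (monom 1 CHAR('a) - [:0, 1:]) CHAR('a)"
    using lead deg p2 by (simp add: coeff_eq_0)
  show "CHAR('a) \<le> card (of_nat ` {..<CHAR('a)} :: 'a set)"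
    by (simp add: card_image of_nat_inj_on_CHAR)
  show "degree (\<Prod>i<CHAR('a). [:- of_nat i, 1:] :: 'a poly) \<le> CHAR('a)"
    using deg by simp
  show "degree (monom 1 CHAR('a) - [:0, 1:] :: 'a poly) \<le> CHAR('a)"
    using p2 by (intro degree_diff_le) (auto simp: degree_monom_le)
  fix z :: 'a
  assume "z \<in> of_nat ` {..<CHAR('a)}"
  then obtain i where i: "i < CHAR('a)" "z = of_nat i"
    by blast
  have "poly (\<Prod>i<CHAR('a). [:- of_nat i, 1:]) z = 0"
    using i by (auto simp: poly_prod)
  moreover have "poly (monom 1 CHAR('a) - [:0, 1:]) z = 0"
    using i by (simp add: poly_monom of_nat_power_CHAR)
  ultimately show "poly (\<Prod>i<CHAR('a). [:- of_nat i, 1:]) z = poly (monom 1 CHAR('a) - [:0, 1:]) z"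
    by simp
qed

lemma prod_diff_of_nat_CHAR: "(\<Prod>i<CHAR('a). x - of_nat i) = x ^ CHAR('a) - (x :: 'a::field_prime_char)"
proof -
  have "poly (\<Prod>i<CHAR('a). [:- of_nat i, 1:]) x = poly (monom 1 CHAR('a) - [:0, 1:]) x"
    by (simp only: prod_linear_of_nat_CHAR)
  then show ?thesis
    by (simp add: poly_prod poly_monom)
qed

(* Binomial coefficients of field elements; gbinomial needs characteristic 0. *)
definition binom :: "'a::field \<Rightarrow> nat \<Rightarrow> 'a" where
  "binom x m = (\<Prod>i<m. x - of_nat i) / of_nat (fact m)"

lemma binom_0 [simp]: "binom x 0 = 1"
  by (simp add: binom_def)

lemma binom_Suc: "binom x (Suc m) = binom x m * (x - of_nat m) / of_nat (Suc m)"
  unfolding binom_def prod.lessThan_Suc fact_Suc of_nat_mult of_nat_id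
  by (simp add: divide_divide_eq_left mult_ac)

lemma binom_minus_one:
  "of_nat (fact n) \<noteq> (0 :: 'a::field) \<Longrightarrow> binom (-1 :: 'a) n = (-1) ^ n"
proof (induction n)
  case (Suc n)
  have "(of_nat (fact (Suc n)) :: 'a) = of_nat (Suc n) * of_nat (fact n)"
    by (simp only: fact_Suc of_nat_mult of_nat_id)
  with Suc.prems have "(of_nat (Suc n) :: 'a) \<noteq> 0" "(of_nat (fact n) :: 'a) \<noteq> 0"
    by auto
  with Suc.IH show ?case
    by (simp add: binom_Suc field_simps)
qed simp

lemma mult_binom_CHAR:
  "x * binom (x - 1) (CHAR('a) - 1) = - (x ^ CHAR('a) - (x :: 'a::field_prime_char))"
proof -
  obtain n where p: "CHAR('a) = Suc n"
    using CHAR_pos not0_implies_Suc by blast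
  have "x * (\<Prod>i<n. x - 1 - of_nat i) = (\<Prod>i<CHAR('a). x - of_nat i)"
    unfolding p by (simp only: prod.lessThan_Suc_shift) (simp add: algebra_simps)
  also have "\<dots> = x ^ CHAR('a) - x"
    by (rule prod_diff_of_nat_CHAR)
  finally show ?thesis
    using fact_CHAR_minus_1[where 'a='a] by (simp add: binom_def p)
qed

lemma poly_pbinom: "poly (pbinom q m) x = binom (poly q x) m"
  by (simp add: pbinom_def binom_def poly_prod of_nat_poly divide_inverse mult.commute)

lemma degree_pbinom_le: "degree (pbinom q m) \<le> m * degree q"
proof -
  have "degree (\<Prod>i<m. q - of_nat i) \<le> (\<Sum>i<m. degree (q - of_nat i))"
    using degree_prod_sum_le[of "{..<m}" "\<lambda>i. q - of_nat i"] by (simp add: o_def)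
  also have "\<dots> \<le> (\<Sum>i<m. degree q)"
    by (intro sum_mono degree_diff_le) (simp_all add: of_nat_poly)
  finally show ?thesis
    by (simp add: pbinom_def)
qed

lemma sum_poly_of_nat_CHAR:
  assumes "degree q < CHAR('a) - 1"
  shows "(\<Sum>k<CHAR('a). poly q (of_nat k) :: 'a::idom_prime_char) = 0"
proof -
  have "(\<Sum>k<CHAR('a). poly q (of_nat k) :: 'a)
      = (\<Sum>i\<le>degree q. coeff q i * (\<Sum>k<CHAR('a). of_nat k ^ i))"
    by (simp add: poly_altdef sum_distrib_left sum.swap[of _ "{..<CHAR('a)}"])
  also have "\<dots> = 0"
    using assms by (intro sum.neutral) (simp add: sum_of_nat_power_CHAR)
  finally show ?thesis .
qed

lemma sum_poly_of_nat_nonzero_CHAR: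
  assumes "degree q < CHAR('a) - 1"
  shows "(\<Sum>k\<in>{1..CHAR('a) - 1}. poly q (of_nat k) :: 'a::idom_prime_char) = - poly q 0"
proof -
  have "{..<CHAR('a)} = insert 0 {1..CHAR('a) - 1}"
    using CHAR_pos[where 'a='a] by auto
  then show ?thesis
    using sum_poly_of_nat_CHAR[OF assms] by (simp add: eq_neg_iff_add_eq_0 add.commute)
qed

lemma sum_inverse_of_nat_CHAR:
  assumes "odd CHAR('a)"
  shows "(\<Sum>k\<in>{1..CHAR('a) - 1}. inverse (of_nat k) :: 'a::field_prime_char) = 0"
proof -
  have p3: "CHAR('a) \<ge> 3"
    using assms prime_ge_2_nat[of "CHAR('a)"] by (cases "CHAR('a) = 2") auto
  have "inverse (of_nat k) = poly (monom 1 (CHAR('a) - 2)) (of_nat k :: 'a)"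
    if "k \<in> {1..CHAR('a) - 1}" for k
    unfolding poly_monom
  proof (rule inverse_unique)
    have "(of_nat k :: 'a) * (1 * of_nat k ^ (CHAR('a) - 2)) * of_nat k = of_nat k ^ CHAR('a)"
      using p3 by (simp flip: power_Suc power_Suc2 add: Suc_diff_Suc numeral_2_eq_2)
    also have "\<dots> = 1 * of_nat k"
      by (simp add: of_nat_power_CHAR)
    finally have "(of_nat k :: 'a) * (1 * of_nat k ^ (CHAR('a) - 2)) * of_nat k = 1 * of_nat k" .
    moreover have "(of_nat k :: 'a) \<noteq> 0"
      using that p3 by (intro of_nat_neq_0_below_CHAR) auto
    ultimately show "(of_nat k :: 'a) * (1 * of_nat k ^ (CHAR('a) - 2)) = 1"
      by simp
  qed
  then have "(\<Sum>k\<in>{1..CHAR('a) - 1}. inverse (of_nat k) :: 'a)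
      = (\<Sum>k\<in>{1..CHAR('a) - 1}. poly (monom 1 (CHAR('a) - 2)) (of_nat k))"
    by (rule sum.cong[OF refl])
  also have "\<dots> = - poly (monom 1 (CHAR('a) - 2)) 0"
    using p3 by (intro sum_poly_of_nat_nonzero_CHAR) (simp add: degree_monom_eq)
  also have "\<dots> = 0"
    using p3 by (simp add: poly_monom)
  finally show ?thesis .
qed

lemma pderiv_eq_0_iff_CHAR:
  fixes p :: "'a::idom_prime_char poly"
  assumes "degree p < CHAR('a)"
  shows "pderiv p = 0 \<longleftrightarrow> degree p = 0"
proof
  assume "pderiv p = 0"
  show "degree p = 0"
  proof (rule ccontr)
    assume d: "degree p \<noteq> 0"
    then have "coeff (pderiv p) (degree p - 1) = of_nat (degree p) * lead_coeff p"
      by (simp add: coeff_pderiv)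
    moreover have "(of_nat (degree p) :: 'a) \<noteq> 0"
      using d assms by (intro of_nat_neq_0_below_CHAR) simp_all
    moreover have "lead_coeff p \<noteq> 0"
      using d by auto
    ultimately show False
      using \<open>pderiv p = 0\<close> by simp
  qed
next
  assume "degree p = 0"
  then obtain c where "p = [:c:]"
    by (rule degree_eq_zeroE)
  then show "pderiv p = 0"
    by (simp add: pderiv_pCons)
qed

section \<open>The operator X d/dX - t (X - a)\<close>

definition laguerre_op :: "'a::idom \<Rightarrow> 'a \<Rightarrow> 'a poly \<Rightarrow> 'a poly" where
  "laguerre_op a t f = [:0, 1:] * pderiv f - smult t ([:- a, 1:] * f)"

lemma coeff_laguerre_op:
  "coeff (laguerre_op a t f) j
     = of_nat j * coeff f j - t * ((if j = 0 then 0 else coeff f (j - 1)) - a * coeff f j)"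
  by (cases j) (simp_all add: laguerre_op_def coeff_pderiv algebra_simps)

lemma laguerre_op_diff: "laguerre_op a t (f - g) = laguerre_op a t f - laguerre_op a t g"
  by (rule poly_eqI) (simp add: coeff_laguerre_op algebra_simps)

lemma laguerre_op_mult:
  "laguerre_op a (t + u) (f * g) = laguerre_op a t f * g + f * laguerre_op a u g"
  by (simp add: laguerre_op_def pderiv_mult algebra_simps smult_add_left)

lemma laguerre_op_mult_const:
  "pderiv h = 0 \<Longrightarrow> laguerre_op a t (h * f) = h * laguerre_op a t f"
  by (simp add: laguerre_op_def pderiv_mult algebra_simps)

lemma laguerre_op_mod_dvd:
  assumes "pderiv n = 0" and "n dvd laguerre_op a t f"
  shows "n dvd laguerre_op a t (f mod n)"
proof -
  have "f mod n = f - n * (f div n)"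
    by (simp add: minus_div_mult_eq_mod[symmetric] mult.commute)
  then show ?thesis
    using assms by (simp add: laguerre_op_diff laguerre_op_mult_const)
qed

lemma degree_monom_minus_const: "0 < n \<Longrightarrow> degree (monom 1 n - [:c:] :: 'a::field poly) = n"
  by (rule antisym) (auto intro!: degree_le le_degree simp: coeff_monom coeff_const)

lemma coeff_laguerre_op_eq_0_if_dvd:
  fixes y :: "'a::field poly"
  assumes deg: "degree y < n" and dvd: "monom 1 n - [:c:] dvd laguerre_op a t y"
    and k: "0 < k" "k < n"
  shows "coeff (laguerre_op a t y) k = 0"
proof -
  obtain q where q: "laguerre_op a t y = (monom 1 n - [:c:]) * q"
    using dvd by blast
  have degN: "degree (monom 1 n - [:c:] :: 'a poly) = n"
    using k by (simp add: degree_monom_minus_const)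
  then have "monom 1 n - [:c:] \<noteq> (0 :: 'a poly)"
    using k by auto
  moreover have "degree (laguerre_op a t y) \<le> n"
    using deg by (intro degree_le) (auto simp: coeff_laguerre_op coeff_eq_0)
  ultimately have "degree q = 0"
    using degN by (cases "q = 0") (auto simp: q degree_mult_eq)
  then obtain d where "q = [:d:]"
    by (rule degree_eq_zeroE)
  then show ?thesis
    using k by (simp add: q coeff_monom coeff_const)
qed

lemma laguerre_op_coeff_recurrence:
  fixes y :: "'a::field poly"
  assumes "degree y < n" and "monom 1 n - [:c:] dvd laguerre_op a t y"
    and "0 < k" "k < n"
  shows "t * coeff y (k - 1) = (of_nat k + t * a) * coeff y k"
proof -
  have "of_nat k * coeff y k - t * (coeff y (k - 1) - a * coeff y k) = 0"
    using coeff_laguerre_op_eq_0_if_dvd[OF assms] \<open>0 < k\<close> by (simp add: coeff_laguerre_op)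
  then show ?thesis
    by (simp add: algebra_simps)
qed

lemma laguerre_op_dvd_unique:
  fixes y z :: "'a::field poly"
  assumes dy: "degree y < n" and dz: "degree z < n" and t: "t \<noteq> 0"
    and vy: "monom 1 n - [:c:] dvd laguerre_op a t y"
    and vz: "monom 1 n - [:c:] dvd laguerre_op a t z"
  shows "smult (coeff z (n - 1)) y = smult (coeff y (n - 1)) z"
proof -
  define Y Z where "Y = coeff y (n - 1)" and "Z = coeff z (n - 1)"
  have "Z * coeff y (n - 1 - d) = Y * coeff z (n - 1 - d)" if "d < n" for d
    using that
  proof (induction d)
    case 0
    then show ?case by (simp add: Y_def Z_def mult.commute)
  next
    case (Suc d)
    define k where "k = n - 1 - d"
    have k: "0 < k" "k < n" "n - 1 - Suc d = k - 1"
      using Suc.prems by (auto simp: k_def)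
    define C where "C = of_nat k + t * a"
    have "t * (Z * coeff y (k - 1)) = C * (Z * coeff y k)"
      using laguerre_op_coeff_recurrence[OF dy vy k(1,2)] by (simp add: C_def algebra_simps)
    also have "Z * coeff y k = Y * coeff z k"
      using Suc by (simp add: k_def)
    also have "C * (Y * coeff z k) = t * (Y * coeff z (k - 1))"
      using laguerre_op_coeff_recurrence[OF dz vz k(1,2)] by (simp add: C_def algebra_simps)
    finally show ?case
      using t k(3) by simp
  qed
  note down = this
  show ?thesis
  proof (rule poly_eqI)
    fix i
    show "coeff (smult (coeff z (n - 1)) y) i = coeff (smult (coeff y (n - 1)) z) i"
    proof (cases "i < n")
      case True
      then have "n - 1 - (n - 1 - i) = i"
        by simp
      then show ?thesis
        using down[of "n - 1 - i"] True by (simp add: Z_def Y_def)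
    next
      case False
      then show ?thesis
        using dy dz by (simp add: coeff_eq_0)
    qed
  qed
qed

lemma coeff_mod_monom_minus_const:
  fixes P :: "'a::field poly"
  assumes n: "0 < n" and deg: "degree P \<le> 2 * n - 2"
  shows "coeff (P mod (monom 1 n - [:c:])) (n - 1) = coeff P (n - 1)"
proof -
  define N where "N = (monom 1 n - [:c:] :: 'a poly)"
  define q where "q = P div N"
  have degN: "degree N = n"
    using n by (simp add: N_def degree_monom_minus_const)
  have P: "P = N * q + P mod N"
    by (simp add: q_def)
  have "coeff (N * q) (n - 1) = 0"
  proof (cases "q = 0")
    case False
    have N0: "N \<noteq> 0"
      using degN n by auto
    then have "degree (P mod N) < n"
      using degree_mod_less[of N P] degN n by auto
    moreover have "N * q = P - P mod N"
      using P by (simp add: eq_diff_eq)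
    ultimately have "degree (N * q) \<le> 2 * n - 2"
      using deg by (auto intro: degree_diff_le)
    then have "degree q < n - 1"
      using degree_mult_eq[OF N0 False] degN n by simp
    then show ?thesis
      using n by (simp add: N_def left_diff_distrib coeff_monom_mult coeff_eq_0)
  qed simp
  then show ?thesis
    by (subst (2) P) (simp add: N_def)
qed

section \<open>Scaled Laguerre polynomials\<close>

(* scaled_laguerre a s is L_{p-1}^{(s a)}(s X), where p is the characteristic. *)
definition scaled_laguerre :: "'a::field_prime_char \<Rightarrow> nat \<Rightarrow> 'a poly" where
  "scaled_laguerre a s = (\<Sum>k<CHAR('a).
     monom ((- of_nat s) ^ k / of_nat (fact k) * binom (of_nat s * a - 1) (CHAR('a) - 1 - k)) k)"

definition laguerre_modulus :: "'a::field_prime_char \<Rightarrow> 'a poly" where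
  "laguerre_modulus a = monom 1 CHAR('a) - [:a ^ CHAR('a) - a:]"

lemma pderiv_laguerre_modulus: "pderiv (laguerre_modulus a) = 0"
  by (simp add: laguerre_modulus_def pderiv_diff pderiv_monom pderiv_pCons)

lemma degree_laguerre_modulus: "degree (laguerre_modulus (a :: 'a::field_prime_char)) = CHAR('a)"
  by (simp add: laguerre_modulus_def degree_monom_minus_const)

lemma laguerre_modulus_neq_0: "laguerre_modulus a \<noteq> 0"
  using degree_laguerre_modulus[of a] by (intro notI) simp

lemma coeff_scaled_laguerre:
  fixes a :: "'a::field_prime_char"
  shows "coeff (scaled_laguerre a s) k
     = (if k < CHAR('a) then (- of_nat s) ^ k / of_nat (fact k) * binom (of_nat s * a - 1) (CHAR('a) - 1 - k)
        else 0)"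
  by (simp add: scaled_laguerre_def coeff_sum coeff_monom)

lemma degree_scaled_laguerre: "degree (scaled_laguerre (a :: 'a::field_prime_char) s) < CHAR('a)"
proof -
  have "degree (scaled_laguerre a s) \<le> CHAR('a) - 1"
    by (rule degree_le) (auto simp: coeff_scaled_laguerre)
  then show ?thesis
    using CHAR_pos[where 'a='a] by linarith
qed

lemma minus_of_nat_power_CHAR_minus_1:
  assumes "odd CHAR('a)" and "\<not> CHAR('a) dvd s"
  shows "(- of_nat s :: 'a::field_prime_char) ^ (CHAR('a) - 1) = 1"
proof -
  have "(of_nat s :: 'a) ^ (CHAR('a) - 1) * of_nat s = 1 * of_nat s"
    using CHAR_pos[where 'a='a] by (simp add: of_nat_power_CHAR flip: power_Suc2)
  moreover have "(of_nat s :: 'a) \<noteq> 0"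
    using assms(2) by (simp add: of_nat_eq_0_iff_char_dvd)
  ultimately show ?thesis
    using assms(1) by simp
qed

lemma coeff_scaled_laguerre_top:
  fixes a :: "'a::field_prime_char"
  assumes "odd CHAR('a)" and "\<not> CHAR('a) dvd s"
  shows "coeff (scaled_laguerre a s) (CHAR('a) - 1) = -1"
  using minus_of_nat_power_CHAR_minus_1[OF assms] fact_CHAR_minus_1[where 'a='a]
  by (simp add: coeff_scaled_laguerre)

lemma coeff_scaled_laguerre_recurrence:
  fixes a :: "'a::field_prime_char"
  assumes j: "0 < j" "j < CHAR('a)"
  shows "of_nat s * coeff (scaled_laguerre a s) (j - 1)
    = (of_nat j + of_nat s * a) * coeff (scaled_laguerre a s) j"
proof -
  obtain i where i: "j = Suc i"
    using j(1) not0_implies_Suc by blast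
  define n where "n = CHAR('a) - 1 - j"
  define B where "B = binom (of_nat s * a - 1) n"
  define u where "u = (- of_nat s) ^ i / of_nat (fact i) * B"
  have "of_nat (Suc n) + of_nat j = (of_nat (CHAR('a)) :: 'a)"
    using j by (simp only: n_def of_nat_add [symmetric]) simp
  then have n: "(of_nat (Suc n) :: 'a) = - of_nat j" "(of_nat n :: 'a) = - of_nat j - 1"
    by (simp_all add: eq_neg_iff_add_eq_0 algebra_simps)
  have prev: "coeff (scaled_laguerre a s) (j - 1) = - u * (of_nat s * a + of_nat j) / of_nat j"
  proof -
    have "CHAR('a) - 1 - (j - 1) = Suc n"
      using j by (simp add: n_def)
    then have "coeff (scaled_laguerre a s) (j - 1)
        = (- of_nat s) ^ i / of_nat (fact i) * (B * (of_nat s * a - 1 - of_nat n) / of_nat (Suc n))"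
      using j by (simp add: coeff_scaled_laguerre i binom_Suc B_def)
    then show ?thesis
      by (simp add: n u_def divide_inverse algebra_simps)
  qed
  have cur: "coeff (scaled_laguerre a s) j = - of_nat s * u / of_nat j"
  proof -
    have "coeff (scaled_laguerre a s) j = (- of_nat s) ^ Suc i / of_nat (fact (Suc i)) * B"
      using j by (simp add: coeff_scaled_laguerre i B_def n_def)
    also have "(of_nat (fact (Suc i)) :: 'a) = of_nat j * of_nat (fact i)"
      by (simp only: i fact_Suc of_nat_mult of_nat_id)
    finally show ?thesis
      by (simp add: u_def divide_inverse inverse_mult_distrib algebra_simps)
  qed
  show ?thesis
    unfolding prev cur by (simp add: divide_inverse algebra_simps)
qed

lemma laguerre_op_scaled_laguerre:
  fixes a :: "'a::field_prime_char"
  assumes odd: "odd CHAR('a)" and s: "\<not> CHAR('a) dvd s"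
  shows "laguerre_op a (of_nat s) (scaled_laguerre a s)
    = smult (of_nat s) (laguerre_modulus a)"
proof (rule poly_eqI)
  fix j
  have p2: "CHAR('a) \<ge> 2"
    using prime_ge_2_nat by simp
  consider "j = 0" | "0 < j" "j < CHAR('a)" | "j = CHAR('a)" | "CHAR('a) < j"
    by linarith
  then show "coeff (laguerre_op a (of_nat s) (scaled_laguerre a s)) j
      = coeff (smult (of_nat s) (laguerre_modulus a)) j"
  proof cases
    case 1
    have "coeff (laguerre_op a (of_nat s) (scaled_laguerre a s)) 0
        = (of_nat s * a) * binom (of_nat s * a - 1) (CHAR('a) - 1)"
      by (simp add: coeff_laguerre_op coeff_scaled_laguerre)
    also have "\<dots> = - ((of_nat s * a) ^ CHAR('a) - of_nat s * a)"
      by (rule mult_binom_CHAR)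
    also have "(of_nat s * a) ^ CHAR('a) = of_nat s * a ^ CHAR('a)"
      by (simp only: power_mult_distrib of_nat_power_CHAR)
    also have "- (of_nat s * a ^ CHAR('a) - of_nat s * a) = coeff (smult (of_nat s) (laguerre_modulus a)) 0"
      using p2 by (simp add: laguerre_modulus_def coeff_const algebra_simps)
    finally show ?thesis
      using 1 by simp
  next
    case 2
    then show ?thesis
      using coeff_scaled_laguerre_recurrence[OF 2, of s a]
      by (simp add: coeff_laguerre_op laguerre_modulus_def coeff_monom coeff_const algebra_simps)
  next
    case 3
    then show ?thesis
      using coeff_scaled_laguerre_top[OF odd s, of a] p2
      by (simp add: coeff_laguerre_op coeff_scaled_laguerre laguerre_modulus_def coeff_const)
  next
    case 4
    then show ?thesis
      by (simp add: coeff_laguerre_op coeff_scaled_laguerre laguerre_modulus_def coeff_const)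
  qed
qed

definition bval :: "'a::field_prime_char \<Rightarrow> nat \<Rightarrow> 'a" where
  "bval a s = (\<Sum>k<CHAR('a). (- (1 / of_nat s)) ^ k
     * (binom (a - 1) (CHAR('a) - 1 - k) * binom (of_nat s * a - 1) k))"

lemma coeff_scaled_laguerre_mult_top:
  fixes a :: "'a::field_prime_char"
  assumes odd: "odd CHAR('a)" and s: "\<not> CHAR('a) dvd s"
  shows "coeff (scaled_laguerre a 1 * scaled_laguerre a s) (CHAR('a) - 1) = - bval a s"
proof -
  obtain n where p: "CHAR('a) = Suc n"
    using CHAR_pos not0_implies_Suc by blast
  have sn: "(- of_nat s :: 'a) ^ n = 1"
    using minus_of_nat_power_CHAR_minus_1[OF odd s] by (simp add: p)
  have s0: "(of_nat s :: 'a) \<noteq> 0"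
    using s by (simp add: of_nat_eq_0_iff_char_dvd)
  have summand: "coeff (scaled_laguerre a 1) i * coeff (scaled_laguerre a s) (n - i)
      = - ((- (1 / of_nat s)) ^ i * (binom (a - 1) (n - i) * binom (of_nat s * a - 1) i))"
    if i: "i \<le> n" for i
  proof -
    have "n - (n - i) = i"
      using i by simp
    then have "coeff (scaled_laguerre a 1) i * coeff (scaled_laguerre a s) (n - i)
        = ((-1) ^ i * inverse (of_nat (fact i) * of_nat (fact (n - i)))) * (- of_nat s) ^ (n - i)
          * (binom (a - 1) (n - i) * binom (of_nat s * a - 1) i)"
      using i by (simp add: coeff_scaled_laguerre p divide_inverse inverse_mult_distrib mult_ac)
    also have "inverse (of_nat (fact i) * of_nat (fact (n - i)) :: 'a) = (-1) ^ Suc i"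
      using fact_mult_fact_CHAR[of i, where 'a='a] i by (simp add: p flip: power_inverse)
    also have "(- of_nat s :: 'a) ^ (n - i) = (- (1 / of_nat s)) ^ i"
    proof -
      have "(- of_nat s :: 'a) ^ i * (- of_nat s) ^ (n - i) = 1"
        using sn i by (simp flip: power_add)
      moreover have "(- of_nat s :: 'a) ^ i * (- (1 / of_nat s)) ^ i = 1"
        using s0 by (simp flip: power_mult_distrib)
      ultimately show ?thesis
        using inverse_unique by metis
    qed
    finally show ?thesis
      by (simp add: minus_one_mult_self)
  qed
  have "coeff (scaled_laguerre a 1 * scaled_laguerre a s) (CHAR('a) - 1)
      = (\<Sum>i\<le>n. coeff (scaled_laguerre a 1) i * coeff (scaled_laguerre a s) (n - i))"
    by (simp add: coeff_mult p)
  also have "\<dots> = (\<Sum>i\<le>n. - ((- (1 / of_nat s)) ^ i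
      * (binom (a - 1) (n - i) * binom (of_nat s * a - 1) i)))"
    by (intro sum.cong refl summand) simp
  also have "\<dots> = - bval a s"
    by (simp add: bval_def p lessThan_Suc_atMost sum_negf)
  finally show ?thesis .
qed

lemma laguerre_op_scaled_laguerre_mult:
  fixes a :: "'a::field_prime_char"
  assumes odd: "odd CHAR('a)" and s: "\<not> CHAR('a) dvd s"
  shows "laguerre_modulus a dvd laguerre_op a (of_nat (Suc s)) (scaled_laguerre a 1 * scaled_laguerre a s)"
proof -
  have "\<not> CHAR('a) dvd 1"
    using prime_ge_2_nat[of "CHAR('a)"] by (auto dest: dvd_imp_le)
  then have "laguerre_op a (1 + of_nat s) (scaled_laguerre a 1 * scaled_laguerre a s)
      = laguerre_modulus a * (scaled_laguerre a s + smult (of_nat s) (scaled_laguerre a 1))"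
    unfolding laguerre_op_mult
    using laguerre_op_scaled_laguerre[OF odd _, of 1 a] laguerre_op_scaled_laguerre[OF odd s, of a]
    by (simp add: algebra_simps)
  then show ?thesis
    unfolding of_nat_Suc by (rule dvdI)
qed

lemma scaled_laguerre_mult_cong:
  fixes a :: "'a::field_prime_char"
  assumes odd: "odd CHAR('a)" and s: "1 \<le> s" "Suc s < CHAR('a)"
  shows "laguerre_modulus a
    dvd scaled_laguerre a 1 * scaled_laguerre a s - smult (bval a s) (scaled_laguerre a (Suc s))"
proof -
  define P where "P = scaled_laguerre a 1 * scaled_laguerre a s"
  define y where "y = P mod laguerre_modulus a"
  define z where "z = scaled_laguerre a (Suc s)"
  have nd: "\<not> CHAR('a) dvd s" "\<not> CHAR('a) dvd Suc s"
    using s by (auto dest: dvd_imp_le)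
  have t: "(of_nat (Suc s) :: 'a) \<noteq> 0"
    using s by (intro of_nat_neq_0_below_CHAR) simp_all
  \<comment> \<open>y and z both solve the congruence for t = s + 1, so they are proportional.\<close>
  have "laguerre_modulus a dvd laguerre_op a (of_nat (Suc s)) y"
    unfolding y_def P_def
    by (intro laguerre_op_mod_dvd pderiv_laguerre_modulus laguerre_op_scaled_laguerre_mult odd nd)
  moreover have "laguerre_modulus a dvd laguerre_op a (of_nat (Suc s)) z"
    unfolding z_def laguerre_op_scaled_laguerre[OF odd nd(2)] by (intro dvd_smult dvd_refl)
  moreover have "degree y < CHAR('a)"
    using degree_mod_less[OF laguerre_modulus_neq_0, of P a] degree_laguerre_modulus[of a]
    by (auto simp: y_def)
  ultimately have "smult (coeff z (CHAR('a) - 1)) y = smult (coeff y (CHAR('a) - 1)) z"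
    using laguerre_op_dvd_unique[OF _ _ t] degree_scaled_laguerre[of a "Suc s"]
    by (simp add: z_def laguerre_modulus_def)
  moreover have "coeff z (CHAR('a) - 1) = -1"
    unfolding z_def by (rule coeff_scaled_laguerre_top[OF odd nd(2)])
  moreover have "coeff y (CHAR('a) - 1) = - bval a s"
  proof -
    have "degree P \<le> 2 * CHAR('a) - 2"
      using degree_mult_le[of "scaled_laguerre a 1" "scaled_laguerre a s"]
        degree_scaled_laguerre[of a 1] degree_scaled_laguerre[of a s]
      by (simp add: P_def)
    then have "coeff y (CHAR('a) - 1) = coeff P (CHAR('a) - 1)"
      unfolding y_def laguerre_modulus_def by (intro coeff_mod_monom_minus_const) simp_all
    also have "\<dots> = - bval a s"
      unfolding P_def by (rule coeff_scaled_laguerre_mult_top[OF odd nd(1)])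
    finally show ?thesis .
  qed
  ultimately have "P mod laguerre_modulus a = smult (bval a s) z"
    by (simp add: y_def)
  then have "P - smult (bval a s) z = laguerre_modulus a * (P div laguerre_modulus a)"
    using minus_mod_eq_mult_div[of P "laguerre_modulus a"] by simp
  then show ?thesis
    unfolding P_def z_def by (rule dvdI)
qed

lemma scaled_laguerre_power_cong:
  fixes a :: "'a::field_prime_char"
  assumes odd: "odd CHAR('a)" and k: "1 \<le> k" "k < CHAR('a)"
  shows "laguerre_modulus a
    dvd scaled_laguerre a 1 ^ k - smult (\<Prod>s=1..k-1. bval a s) (scaled_laguerre a k)"
  using k
proof (induction k rule: dec_induct)
  case base
  then show ?case by simp
next
  case (step k)
  define c where "c = (\<Prod>s=1..k-1. bval a s)"
  have "{1..Suc k - 1} = insert k {1..k - 1}"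
    using step.hyps by auto
  then have "(\<Prod>s=1..Suc k-1. bval a s) = c * bval a k"
    using step.hyps by (simp add: c_def mult.commute)
  then have "scaled_laguerre a 1 ^ Suc k - smult (\<Prod>s=1..Suc k-1. bval a s) (scaled_laguerre a (Suc k))
      = scaled_laguerre a 1 * (scaled_laguerre a 1 ^ k - smult c (scaled_laguerre a k))
        + smult c (scaled_laguerre a 1 * scaled_laguerre a k - smult (bval a k) (scaled_laguerre a (Suc k)))"
    by (simp add: smult_diff_right algebra_simps)
  moreover have "laguerre_modulus a dvd scaled_laguerre a 1 ^ k - smult c (scaled_laguerre a k)"
    using step by (simp add: c_def)
  moreover have "laguerre_modulus a
      dvd scaled_laguerre a 1 * scaled_laguerre a k - smult (bval a k) (scaled_laguerre a (Suc k))"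
    using step.hyps step.prems by (intro scaled_laguerre_mult_cong odd) simp_all
  ultimately show ?case
    by (simp add: dvd_add dvd_mult dvd_smult)
qed

lemma coeff_0_scaled_laguerre:
  fixes a :: "'a::field_prime_char"
  assumes a: "a \<noteq> 0" and k: "\<not> CHAR('a) dvd k"
  shows "coeff (scaled_laguerre a k) 0 = coeff (scaled_laguerre a 1) 0"
proof -
  have scaled: "(of_nat m * a) * coeff (scaled_laguerre a m) 0 = of_nat m * - (a ^ CHAR('a) - a)" for m
  proof -
    have "(of_nat m * a) * coeff (scaled_laguerre a m) 0 = - ((of_nat m * a) ^ CHAR('a) - of_nat m * a)"
      using mult_binom_CHAR[of "of_nat m * a"] by (simp add: coeff_scaled_laguerre)
    also have "(of_nat m * a) ^ CHAR('a) = of_nat m * a ^ CHAR('a)"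
      by (simp only: power_mult_distrib of_nat_power_CHAR)
    finally show ?thesis
      by (simp add: algebra_simps)
  qed
  have "(of_nat k * a) * coeff (scaled_laguerre a k) 0 = (of_nat k * a) * coeff (scaled_laguerre a 1) 0"
    using scaled[of k] scaled[of 1] by (simp add: mult.assoc)
  moreover have "of_nat k * a \<noteq> 0"
    using a k by (simp add: of_nat_eq_0_iff_char_dvd)
  ultimately show ?thesis
    by simp
qed

lemma inverse_mult_coeff_scaled_laguerre:
  fixes a :: "'a::field_prime_char"
  assumes k: "0 < k" "k < CHAR('a)" and j: "1 \<le> j" "j < CHAR('a)"
  shows "inverse (of_nat k) * coeff (scaled_laguerre a k) j
    = (-1) ^ j / of_nat (fact j) * (of_nat k ^ (j - 1) * binom (of_nat k * a - 1) (CHAR('a) - 1 - j))"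
proof -
  have "inverse (of_nat k) * (- of_nat k :: 'a) ^ j
      = (-1) ^ j * of_nat k ^ (j - 1) * (inverse (of_nat k) * of_nat k)"
    using j by (cases j) (simp_all add: power_minus[of "of_nat k"])
  also have "\<dots> = (-1) ^ j * of_nat k ^ (j - 1)"
    using of_nat_neq_0_below_CHAR[OF k] by simp
  finally have "inverse (of_nat k) * (- of_nat k :: 'a) ^ j = (-1) ^ j * of_nat k ^ (j - 1)" .
  moreover have "inverse (of_nat k) * coeff (scaled_laguerre a k) j
      = (inverse (of_nat k) * (- of_nat k) ^ j) / of_nat (fact j)
        * binom (of_nat k * a - 1) (CHAR('a) - 1 - j)"
    using j by (simp add: coeff_scaled_laguerre)
  ultimately show ?thesis
    by simp
qed

lemma sum_inverse_mult_coeff_scaled_laguerre: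
  fixes a :: "'a::field_prime_char"
  assumes odd: "odd CHAR('a)" and j: "1 \<le> j" "j < CHAR('a)"
  shows "(\<Sum>k\<in>{1..CHAR('a) - 1}. inverse (of_nat k) * coeff (scaled_laguerre a k) j)
    = (if j = 1 then -1 else 0)"
proof -
  define n where "n = CHAR('a) - 1 - j"
  \<comment> \<open>the summands are the values at k of W, a polynomial of degree < p - 1\<close>
  define W where "W = monom 1 (j - 1) * pbinom [:- 1, a:] n"
  have poly_W: "poly W x = x ^ (j - 1) * binom (x * a - 1) n" for x
    by (simp add: W_def poly_monom poly_pbinom algebra_simps)
  have "degree (pbinom [:- 1, a:] n) \<le> n"
    using degree_pbinom_le[of "[:- 1, a:]" n] by (cases "a = 0") simp_all
  then have "degree W \<le> j - 1 + n"
    unfolding W_def by (intro order.trans[OF degree_mult_le] add_mono degree_monom_le)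
  then have deg_W: "degree W < CHAR('a) - 1"
    using j unfolding n_def by arith
  have W0: "poly W 0 = (if j = 1 then -1 else 0)"
  proof (cases "j = 1")
    case True
    have "odd n"
      using odd True j by (auto simp: n_def)
    moreover have "binom (-1 :: 'a) n = (-1) ^ n"
      using j by (intro binom_minus_one of_nat_fact_neq_0_CHAR) (simp add: n_def)
    ultimately show ?thesis
      using True by (simp add: poly_W)
  qed (use j in \<open>simp add: poly_W\<close>)
  have "(\<Sum>k\<in>{1..CHAR('a) - 1}. inverse (of_nat k) * coeff (scaled_laguerre a k) j)
      = (\<Sum>k\<in>{1..CHAR('a) - 1}. (-1) ^ j / of_nat (fact j) * poly W (of_nat k))"
  proof (rule sum.cong[OF refl])
    fix k
    assume "k \<in> {1..CHAR('a) - 1}"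
    then have "0 < k" "k < CHAR('a)"
      using CHAR_pos[where 'a='a] by auto
    then show "inverse (of_nat k) * coeff (scaled_laguerre a k) j
        = (-1) ^ j / of_nat (fact j) * poly W (of_nat k)"
      by (simp add: inverse_mult_coeff_scaled_laguerre[OF _ _ j] poly_W n_def)
  qed
  also have "\<dots> = (-1) ^ j / of_nat (fact j) * - poly W 0"
    by (simp only: sum_distrib_left[symmetric] sum_poly_of_nat_nonzero_CHAR[OF deg_W])
  finally show ?thesis
    by (simp add: W0)
qed

lemma sum_scaled_laguerre:
  fixes a :: "'a::field_prime_char"
  assumes odd: "odd CHAR('a)" and a: "a \<noteq> 0"
  shows "(\<Sum>k\<in>{1..CHAR('a) - 1}. smult (inverse (of_nat k)) (scaled_laguerre a k)) = - [:0, 1:]"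
proof (rule poly_eqI)
  fix j
  have p3: "CHAR('a) \<ge> 3"
    using odd prime_ge_2_nat[of "CHAR('a)"] by (cases "CHAR('a) = 2") auto
  have nd: "\<not> CHAR('a) dvd k" if "k \<in> {1..CHAR('a) - 1}" for k
    using that by (auto dest: dvd_imp_le)
  have X: "coeff (- [:0, 1:] :: 'a poly) j = (if j = 1 then -1 else 0)"
    by (cases j) (simp_all add: coeff_pCons')
  consider "j = 0" | "1 \<le> j" "j < CHAR('a)" | "CHAR('a) \<le> j"
    by linarith
  then show "coeff (\<Sum>k\<in>{1..CHAR('a) - 1}. smult (inverse (of_nat k)) (scaled_laguerre a k)) j
      = coeff (- [:0, 1:]) j"
  proof cases
    case 1
    have "(\<Sum>k\<in>{1..CHAR('a) - 1}. inverse (of_nat k) * coeff (scaled_laguerre a k) 0)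
        = (\<Sum>k\<in>{1..CHAR('a) - 1}. inverse (of_nat k)) * coeff (scaled_laguerre a 1) 0"
      unfolding sum_distrib_right
    proof (rule sum.cong[OF refl])
      fix k
      assume "k \<in> {1..CHAR('a) - 1}"
      then show "inverse (of_nat k) * coeff (scaled_laguerre a k) 0
          = inverse (of_nat k) * coeff (scaled_laguerre a 1) 0"
        by (simp only: coeff_0_scaled_laguerre[OF a nd])
    qed
    then show ?thesis
      using 1 sum_inverse_of_nat_CHAR[OF odd] X by (simp add: coeff_sum)
  next
    case 2
    then show ?thesis
      using sum_inverse_mult_coeff_scaled_laguerre[OF odd 2, of a] X by (simp add: coeff_sum)
  next
    case 3
    then show ?thesis
      using p3 X by (simp add: coeff_sum coeff_scaled_laguerre)
  qed
qed

section \<open>The compositional inverse\<close>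

lemma pcompose_monom: "pcompose (monom c k) q = smult c (q ^ k)"
  by (induction k) (simp_all add: monom_0 monom_Suc pcompose_pCons algebra_simps)

lemma dvd_pcompose_pderiv:
  fixes N G L D :: "'a::idom poly"
  assumes N: "pderiv N = 0" and G: "N dvd pcompose G L - [:0, 1:]" and D: "N dvd pcompose D L"
  shows "N dvd pcompose (pderiv D) L"
proof -
  obtain Q where Q: "pcompose D L = N * Q"
    using D by blast
  obtain R where R: "pcompose G L - [:0, 1:] = N * R"
    using G by blast
  define A g where "A = pcompose (pderiv D) L" and "g = pcompose (pderiv G) L"
  have AL: "A * pderiv L = N * pderiv Q"
    using arg_cong[OF Q, of pderiv] N by (simp add: A_def pderiv_pcompose pderiv_mult)
  have gL: "g * pderiv L = 1 + N * pderiv R"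
    using arg_cong[OF R, of pderiv] N
    by (simp add: g_def pderiv_pcompose pderiv_mult pderiv_diff pderiv_pCons diff_eq_eq add.commute)
  have "A = A * (g * pderiv L) - N * (A * pderiv R)"
    by (simp add: gL algebra_simps)
  also have "A * (g * pderiv L) = (A * pderiv L) * g"
    by (simp only: mult_ac)
  finally have "A = N * (pderiv Q * g - A * pderiv R)"
    by (simp add: AL algebra_simps)
  then show ?thesis
    unfolding A_def by (rule dvdI)
qed

lemma pcompose_eq_0_if_dvd:
  fixes D L N :: "'a::field_prime_char poly"
  assumes N: "pderiv N = 0" "0 < degree N" and G: "N dvd pcompose G L - [:0, 1:]"
  shows "degree D < CHAR('a) \<Longrightarrow> N dvd pcompose D L \<Longrightarrow> D = 0"
proof (induction "degree D" arbitrary: D rule: less_induct)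
  case less
  show "D = 0"
  proof (cases "degree D = 0")
    case True
    then obtain c where D: "D = [:c:]"
      by (rule degree_eq_zeroE)
    with less.prems have "N dvd [:c:]"
      by simp
    with N(2) show ?thesis
      using D dvd_imp_degree_le[of N "[:c:]"] by fastforce
  next
    case False
    then have "pderiv D \<noteq> 0"
      using pderiv_eq_0_iff_CHAR[OF less.prems(1)] by simp
    moreover have "degree (pderiv D) < degree D"
      using degree_pderiv_le[of D] False by linarith
    moreover have "N dvd pcompose (pderiv D) L"
      by (rule dvd_pcompose_pderiv[OF N(1) G less.prems(2)])
    ultimately show ?thesis
      using less.hyps less.prems(1) by fastforce
  qed
qed

definition inverse_laguerre :: "'a::field_prime_char \<Rightarrow> 'a poly" where
  "inverse_laguerre a = - (\<Sum>k=1..CHAR('a) - 1.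
     monom (inverse (of_nat k) * inverse (\<Prod>s=1..k-1. bval a s)) k)"

lemma degree_inverse_laguerre: "degree (inverse_laguerre (a :: 'a::field_prime_char)) < CHAR('a)"
proof -
  have "degree (inverse_laguerre a) \<le> CHAR('a) - 1"
    by (rule degree_le) (auto simp: inverse_laguerre_def coeff_sum coeff_monom)
  then show ?thesis
    using CHAR_pos[where 'a='a] by linarith
qed

lemma inverse_laguerre_pcompose_cong:
  fixes a :: "'a::field_prime_char"
  assumes odd: "odd CHAR('a)" and a: "a \<noteq> 0"
    and b: "\<And>s. 1 \<le> s \<Longrightarrow> Suc s < CHAR('a) \<Longrightarrow> bval a s \<noteq> 0"
  shows "laguerre_modulus a dvd pcompose (inverse_laguerre a) (scaled_laguerre a 1) - [:0, 1:]"
proof -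
  let ?K = "{1..CHAR('a) - 1}"
  define e where "e k = (\<Prod>s=1..k-1. bval a s)" for k
  define L where "L k = scaled_laguerre a k" for k
  have e0: "e k \<noteq> 0" if "k \<in> ?K" for k
    using that b by (auto simp: e_def prod_zero_iff)
  have "(\<Sum>k\<in>?K. smult (inverse (of_nat k) * inverse (e k)) (L 1 ^ k - smult (e k) (L k)))
      = (\<Sum>k\<in>?K. smult (inverse (of_nat k) * inverse (e k)) (L 1 ^ k))
        - (\<Sum>k\<in>?K. smult (inverse (of_nat k)) (L k))"
    unfolding sum_subtractf[symmetric]
    by (rule sum.cong[OF refl]) (simp add: smult_diff_right e0 mult.assoc)
  also have "\<dots> = - (pcompose (inverse_laguerre a) (L 1) - [:0, 1:])"
    using sum_scaled_laguerre[OF odd a]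
    by (simp add: L_def e_def inverse_laguerre_def pcompose_sum pcompose_uminus pcompose_monom)
  finally have eq: "pcompose (inverse_laguerre a) (L 1) - [:0, 1:]
      = - (\<Sum>k\<in>?K. smult (inverse (of_nat k) * inverse (e k)) (L 1 ^ k - smult (e k) (L k)))"
    by (simp add: minus_equation_iff[of "pcompose _ _ - _"])
  have power_cong: "laguerre_modulus a dvd L 1 ^ k - smult (e k) (L k)" if "k \<in> ?K" for k
    using that unfolding L_def e_def by (intro scaled_laguerre_power_cong odd) auto
  show ?thesis
    unfolding L_def[symmetric] eq dvd_minus_iff by (intro dvd_sum dvd_smult power_cong)
qed

theorem inverse_laguerre_unique:
  fixes a :: "'a::field_prime_char"
  assumes odd: "odd CHAR('a)" and a: "a \<noteq> 0"
    and b: "\<And>s. 1 \<le> s \<Longrightarrow> Suc s < CHAR('a) \<Longrightarrow> bval a s \<noteq> 0"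
  shows "degree G < CHAR('a) \<and> laguerre_modulus a dvd pcompose G (scaled_laguerre a 1) - [:0, 1:]
    \<longleftrightarrow> G = inverse_laguerre a"
proof
  assume G: "degree G < CHAR('a) \<and> laguerre_modulus a dvd pcompose G (scaled_laguerre a 1) - [:0, 1:]"
  note cong = inverse_laguerre_pcompose_cong[OF odd a b]
  have "laguerre_modulus a dvd pcompose (G - inverse_laguerre a) (scaled_laguerre a 1)"
    using dvd_diff[OF conjunct2[OF G] cong] by (simp add: pcompose_diff)
  moreover have "degree (G - inverse_laguerre a) < CHAR('a)"
    using G degree_inverse_laguerre[of a] by (intro degree_diff_less) auto
  moreover have "0 < degree (laguerre_modulus a)"
    by (simp add: degree_laguerre_modulus)
  ultimately have "G - inverse_laguerre a = 0"
    using pcompose_eq_0_if_dvd[OF pderiv_laguerre_modulus _ cong] by blast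
  then show "G = inverse_laguerre a"
    by simp
next
  assume "G = inverse_laguerre a"
  then show "degree G < CHAR('a) \<and> laguerre_modulus a dvd pcompose G (scaled_laguerre a 1) - [:0, 1:]"
    using degree_inverse_laguerre[of a] inverse_laguerre_pcompose_cong[OF odd a b] by simp
qed

section \<open>Specialisation to the rational function field\<close>

lemma CHAR_fract [simp]: "CHAR('a::idom fract) = CHAR('a)"
proof (rule CHAR_eqI)
  show "of_nat CHAR('a) = (0 :: 'a fract)"
    using to_fract_hom.hom_of_nat[of "CHAR('a)", where 'a='a] by simp
  fix n
  assume "of_nat n = (0 :: 'a fract)"
  then have "of_nat n = (0 :: 'a)"
    using to_fract_hom.hom_of_nat[of n, where 'a='a] by simp
  then show "CHAR('a) dvd n"
    by (simp add: of_nat_eq_0_iff_char_dvd)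
qed

instance fract :: (idom_prime_char) field_prime_char
  by standard (auto intro!: exI[of _ "CHAR('a)"])

interpretation to_fract_const: field_hom "\<lambda>c :: 'a::field. to_fract [:c:]"
proof unfold_locales
  fix x y :: 'a
  show "to_fract [:x + y:] = to_fract [:x:] + to_fract [:y:]"
    by (simp only: coeff_lift_hom.hom_add to_fract_add)
  show "to_fract [:x * y:] = to_fract [:x:] * to_fract [:y:]"
    by (simp only: coeff_lift_hom.hom_mult to_fract_mult)
qed simp_all

lemma to_fract_smult: "to_fract (smult c q) = to_fract [:c:] * to_fract q"
proof -
  have "smult c q = [:c:] * q"
    by simp
  then show ?thesis
    by (simp only: to_fract_mult)
qed

lemma to_fract_pbinom: "to_fract (pbinom q m) = binom (to_fract q) m"
  by (simp add: pbinom_def binom_def to_fract_smult to_fract_hom.hom_prod to_fract_hom.hom_of_nat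
      to_fract_const.hom_inverse to_fract_const.hom_of_nat divide_inverse mult.commute)

lemma bval_0:
  assumes odd: "odd CHAR('a)" and s: "\<not> CHAR('a) dvd s" "\<not> CHAR('a) dvd Suc s"
  shows "bval (0 :: 'a::field_prime_char) s = 1"
proof -
  define u where "u = - (1 / of_nat s :: 'a)"
  have "bval 0 s = (\<Sum>k<CHAR('a). u ^ k)"
  proof (unfold bval_def, rule sum.cong[OF refl])
    fix k
    assume "k \<in> {..<CHAR('a)}"
    then have "binom (-1 :: 'a) (CHAR('a) - 1 - k) = (-1) ^ (CHAR('a) - 1 - k)"
      and "binom (-1 :: 'a) k = (-1) ^ k"
      by (auto intro!: binom_minus_one of_nat_fact_neq_0_CHAR)
    then have "binom (-1 :: 'a) (CHAR('a) - 1 - k) * binom (-1) k = (-1) ^ (CHAR('a) - 1 - k + k)"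
      by (simp only: power_add)
    also have "CHAR('a) - 1 - k + k = CHAR('a) - 1"
      using \<open>k \<in> {..<CHAR('a)}\<close> by simp
    finally show "(- (1 / of_nat s)) ^ k * (binom (0 - 1) (CHAR('a) - 1 - k) * binom (of_nat s * 0 - 1) k)
        = u ^ k"
      using odd by (simp add: u_def)
  qed
  moreover have "(1 - u) * (\<Sum>k<CHAR('a). u ^ k) = (1 - u) * 1"
  proof -
    have "u ^ CHAR('a) = u"
      using odd by (simp add: u_def power_divide of_nat_power_CHAR)
    then show ?thesis
      by (simp flip: one_diff_power_eq)
  qed
  moreover have "u \<noteq> 1"
  proof
    assume "u = 1"
    moreover have "(of_nat s :: 'a) \<noteq> 0"
      using s(1) by (simp add: of_nat_eq_0_iff_char_dvd)
    ultimately have "(of_nat s :: 'a) = -1"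
      by (simp add: u_def field_simps)
    then have "(of_nat (Suc s) :: 'a) = 0"
      by simp
    with s(2) show False
      by (simp only: of_nat_eq_0_iff_char_dvd)
  qed
  ultimately show ?thesis
    by simp
qed

lemma poly_bpoly: "poly (bpoly CHAR('a) 1 s) c = bval (c :: 'a::field_prime_char) s"
  by (simp add: bpoly_def bval_def poly_sum poly_pbinom alpha_def ac_simps)

lemma to_fract_bpoly:
  "to_fract (bpoly CHAR('a) 1 s) = bval (to_fract alpha :: 'a::field_prime_char poly fract) s"
  by (simp add: bpoly_def bval_def to_fract_smult to_fract_pbinom to_fract_const.hom_power
      to_fract_const.hom_uminus to_fract_const.hom_div to_fract_const.hom_of_nat)

lemma laguerre_eq_scaled_laguerre:
  "laguerre CHAR('a) = scaled_laguerre (to_fract alpha :: 'a::field_prime_char poly fract) 1"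
  by (simp add: laguerre_def scaled_laguerre_def laguerre_coeff_def to_fract_smult to_fract_pbinom
      to_fract_const.hom_mult to_fract_const.hom_power to_fract_const.hom_uminus
      to_fract_const.hom_inverse to_fract_const.hom_of_nat divide_inverse)

lemma Gpoly_eq_inverse_laguerre:
  "Gpoly CHAR('a) = inverse_laguerre (to_fract alpha :: 'a::field_prime_char poly fract)"
  by (simp only: Gpoly_def inverse_laguerre_def to_fract_bpoly CHAR_fract semiring_char_poly)

lemma laguerre_modulus_alpha:
  "laguerre_modulus (to_fract alpha :: 'a::field_prime_char poly fract)
    = monom 1 CHAR('a) - [:to_fract (alpha ^ CHAR('a) - alpha):]"
  by (simp add: laguerre_modulus_def to_fract_hom.hom_power)

lemma bval_alpha_neq_0:
  assumes "odd CHAR('a)" and "\<not> CHAR('a) dvd s" "\<not> CHAR('a) dvd Suc s"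
  shows "bval (to_fract alpha :: 'a::field_prime_char poly fract) s \<noteq> 0"
proof -
  have "poly (bpoly CHAR('a) 1 s) 0 = (1 :: 'a)"
    by (simp only: poly_bpoly bval_0[OF assms])
  then have "bpoly CHAR('a) 1 s \<noteq> (0 :: 'a poly)"
    by auto
  then show ?thesis
    by (simp only: to_fract_bpoly[symmetric] to_fract_eq_0_iff not_False_eq_True)
qed

theorem Gpoly_unique:
  fixes G :: "'a::field_prime_char poly fract poly"
  assumes odd: "odd CHAR('a)"
  shows "(degree G < CHAR('a) \<and>
          (monom 1 CHAR('a) - [: to_fract (alpha ^ CHAR('a) - alpha) :]) dvd
            (pcompose G (laguerre CHAR('a)) - [:0, 1:]))
         \<longleftrightarrow> G = Gpoly CHAR('a)"
proof -
  have "bval (to_fract alpha :: 'a poly fract) s \<noteq> 0" if "1 \<le> s" "Suc s < CHAR('a)" for s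
    using that by (intro bval_alpha_neq_0 odd) (auto dest: dvd_imp_le)
  moreover have "to_fract alpha \<noteq> (0 :: 'a poly fract)"
    by (simp add: alpha_def)
  ultimately show ?thesis
    using inverse_laguerre_unique[of "to_fract alpha :: 'a poly fract" G] odd
    by (simp add: laguerre_modulus_alpha laguerre_eq_scaled_laguerre Gpoly_eq_inverse_laguerre)
qed

theorem theorem2:
  fixes G :: "('p::prime_card mod_ring poly) fract poly"
  assumes "odd CARD('p)"
  shows "(degree G < CARD('p) \<and>
          (monom 1 CARD('p) - [: to_fract (alpha ^ CARD('p) - alpha) :]) dvd
            (pcompose G (laguerre CARD('p)) - [:0, 1:]))
         \<longleftrightarrow> G = Gpoly CARD('p)"
  using Gpoly_unique[where 'a="'p mod_ring"] assms by simp

end
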